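(* Let $X$ be a special (abstract) rank one group with abelian unipotent subgroups $A$ and $B$, and set $H = N_X(A) \cap N_X(B)$. Then for all $1 \neq a_1, a_2 \in A$ with $a_1 a_2 \neq 1$ we have $a_1 \in a_2 [A,H]$.
   Context: For a group $X$ and $g,x \in X$, write $x^g = g^{-1}xg$, $A^g = g^{-1}Ag$, and $[x,g] = x^{-1}g^{-1}xg$; $[A,H]$ denotes the subgroup generated by all $[a,h]$ with $a \in A$, $h \in H$. A group $X$ is an (abstract) rank one group with abelian unipotent subgroups $A$ and $B$ if $X = \langle A, B\rangle$ where $A$ and $B$ are different abelian subgroups of $X$ such that for each $1 \neq a \in A$ there is an element $1 \neq b \in B$ with $A^b = B^a$, and for each $1 \neq b \in B$ there is an element $1 \neq a \in A$ with $B^a = A^b$. In such a group, for each $1 \neq a \in A$ the element $1 \neq b \in B$ with $A^b = B^a$ is uniquely determined and is denoted $b(a)$. The group $X$ is called special if $b(a^{-1}) = b(a)^{-1}$ for all $1 \neq a \in A$. *)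

theory Defs
  imports "HOL-Algebra.Group_Action" "HOL-Algebra.Generated_Groups"
begin

definition conjg :: "('a, 'b) monoid_scheme \<Rightarrow> 'a \<Rightarrow> 'a \<Rightarrow> 'a" where
  "conjg G x g = inv\<^bsub>G\<^esub> g \<otimes>\<^bsub>G\<^esub> x \<otimes>\<^bsub>G\<^esub> g"

definition conjset :: "('a, 'b) monoid_scheme \<Rightarrow> 'a set \<Rightarrow> 'a \<Rightarrow> 'a set" where
  "conjset G A g = (\<lambda>x. conjg G x g) ` A"

definition commg :: "('a, 'b) monoid_scheme \<Rightarrow> 'a \<Rightarrow> 'a \<Rightarrow> 'a" where
  "commg G x g = inv\<^bsub>G\<^esub> x \<otimes>\<^bsub>G\<^esub> inv\<^bsub>G\<^esub> g \<otimes>\<^bsub>G\<^esub> x \<otimes>\<^bsub>G\<^esub> g"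

definition comm_subgroup :: "('a, 'b) monoid_scheme \<Rightarrow> 'a set \<Rightarrow> 'a set \<Rightarrow> 'a set" where
  "comm_subgroup G A H = generate G {commg G a h | a h. a \<in> A \<and> h \<in> H}"

definition rank_one_group :: "('a, 'b) monoid_scheme \<Rightarrow> 'a set \<Rightarrow> 'a set \<Rightarrow> bool" where
  "rank_one_group G A B \<longleftrightarrow>
     group G \<and> subgroup A G \<and> subgroup B G \<and>
     (\<forall>x\<in>A. \<forall>y\<in>A. x \<otimes>\<^bsub>G\<^esub> y = y \<otimes>\<^bsub>G\<^esub> x) \<and>
     (\<forall>x\<in>B. \<forall>y\<in>B. x \<otimes>\<^bsub>G\<^esub> y = y \<otimes>\<^bsub>G\<^esub> x) \<and>
     A \<noteq> B \<and>
     generate G (A \<union> B) = carrier G \<and>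
     (\<forall>a\<in>A - {\<one>\<^bsub>G\<^esub>}. \<exists>b\<in>B - {\<one>\<^bsub>G\<^esub>}. conjset G A b = conjset G B a) \<and>
     (\<forall>b\<in>B - {\<one>\<^bsub>G\<^esub>}. \<exists>a\<in>A - {\<one>\<^bsub>G\<^esub>}. conjset G B a = conjset G A b)"

definition b_of :: "('a, 'b) monoid_scheme \<Rightarrow> 'a set \<Rightarrow> 'a set \<Rightarrow> 'a \<Rightarrow> 'a" where
  "b_of G A B a = (THE b. b \<in> B - {\<one>\<^bsub>G\<^esub>} \<and> conjset G A b = conjset G B a)"

definition special_rank_one_group :: "('a, 'b) monoid_scheme \<Rightarrow> 'a set \<Rightarrow> 'a set \<Rightarrow> bool" where
  "special_rank_one_group G A B \<longleftrightarrow> rank_one_group G A B \<and>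
     (\<forall>a\<in>A - {\<one>\<^bsub>G\<^esub>}. b_of G A B (inv\<^bsub>G\<^esub> a) = inv\<^bsub>G\<^esub> (b_of G A B a))"

end

theory Submission
  imports Defs
begin

(* Write b(a) for the element of B with A^b(a) = B^a, and put
   mu(a) = a b(a)^-1 a.  Specialness gives A^b(a)^-1 = B^a^-1, from which one
   computes A^mu(a) = B and B^mu(a) = A.  Hence h = mu(a1) mu(a2)^-1 normalises
   both A and B.  With a3 = a1 a2, the elements z_i = mu(a_i) b(a3) mu(a_i)^-1 lie
   in A, satisfy z_2 = z_1^h, and a direct computation gives
   B^(z_1 a_1) = A^(b(a2) b(a1)) = A^(b(a1) b(a2)) = B^(z_2 a_2), B being abelian.
   Since a |-> B^a is injective on A, z_1 a_1 = z_2 a_2, so that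
   [z_1, h] = z_1^-1 z_2 = a2^-1 a1 and a1 = a2 [z_1, h] lies in a2 [A,H]. *)

context group
begin

lemma conjg_closed [simp]:
  "x \<in> carrier G \<Longrightarrow> g \<in> carrier G \<Longrightarrow> conjg G x g \<in> carrier G"
  unfolding conjg_def by simp

lemma conjg_mult:
  assumes "x \<in> carrier G" "g \<in> carrier G" "h \<in> carrier G"
  shows "conjg G (conjg G x g) h = conjg G x (g \<otimes> h)"
  using assms unfolding conjg_def by (simp add: m_assoc inv_mult_group)

lemma conjset_closed:
  "X \<subseteq> carrier G \<Longrightarrow> g \<in> carrier G \<Longrightarrow> conjset G X g \<subseteq> carrier G"
  unfolding conjset_def by auto

lemma conjset_mult:
  assumes "X \<subseteq> carrier G" "g \<in> carrier G" "h \<in> carrier G"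
  shows "conjset G (conjset G X g) h = conjset G X (g \<otimes> h)"
  unfolding conjset_def image_image
  using assms conjg_mult by (intro image_cong) auto

lemma conjset_one: "X \<subseteq> carrier G \<Longrightarrow> conjset G X \<one> = X"
  unfolding conjset_def conjg_def by (auto simp: subsetD)

lemma conjset_inv:
  assumes "X \<subseteq> carrier G" "g \<in> carrier G" "conjset G X g = Y"
  shows "conjset G Y (inv g) = X"
  using assms conjset_mult[of X g "inv g"] conjset_one[of X] by simp

lemma conjset_subgroup_self:
  assumes "subgroup X G" "g \<in> X"
  shows "conjset G X g = X"
proof -
  have sub: "conjset G X k \<subseteq> X" if "k \<in> X" for k
    using assms(1) that unfolding conjset_def conjg_def
    by (auto intro!: subgroup.m_closed subgroup.m_inv_closed)
  have X: "X \<subseteq> carrier G" and g: "g \<in> carrier G"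
    using assms subgroup.subset by blast+
  have "X = conjset G (conjset G X (inv g)) g"
    using conjset_inv[OF X inv_closed[OF g] refl] g by simp
  also have "\<dots> \<subseteq> conjset G X g"
    unfolding conjset_def[of G _ g] using sub[OF subgroup.m_inv_closed[OF assms]]
    by (rule image_mono)
  finally show ?thesis using sub[OF assms(2)] by blast
qed

text \<open>The library normalizer is defined via g X g^-1; in terms of right
  conjugation it consists of the g with X^g = X.\<close>
lemma normalizer_iff_conjset:
  assumes "X \<subseteq> carrier G"
  shows "g \<in> normalizer G X \<longleftrightarrow> g \<in> carrier G \<and> conjset G X g = X"
proof -
  have coset: "g <# X #> inv g = conjset G X (inv g)" if "g \<in> carrier G" for g
    unfolding l_coset_def r_coset_def conjset_def conjg_def
    using that assms by (auto simp: image_image)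
  have inv_iff: "conjset G X (inv g) = X \<longleftrightarrow> conjset G X g = X" if "g \<in> carrier G" for g
    using conjset_inv[OF assms] that by (metis inv_closed inv_inv)
  have norm: "g \<in> normalizer G X \<longleftrightarrow> g \<in> carrier G \<and> g <# X #> inv g = X"
    unfolding normalizer_def stabilizer_def using assms by simp
  show ?thesis
  proof (cases "g \<in> carrier G")
    case True
    then show ?thesis using norm coset[OF True] inv_iff[OF True] by simp
  qed (use norm in simp)
qed

lemma quotient_in_normalizer:
  assumes "X \<subseteq> carrier G" "g \<in> carrier G" "g' \<in> carrier G"
    and "conjset G X g = Y" "conjset G X g' = Y"
  shows "g \<otimes> inv g' \<in> normalizer G X"
  using assms conjset_mult[OF assms(1,2) inv_closed[OF assms(3)]] conjset_inv[OF assms(1,3,5)]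
  by (simp add: normalizer_iff_conjset)

lemma commg_conjg:
  "x \<in> carrier G \<Longrightarrow> g \<in> carrier G \<Longrightarrow> commg G x g = inv x \<otimes> conjg G x g"
  unfolding commg_def conjg_def by (simp add: m_assoc)

end

lemma rank_one_group_sym: "rank_one_group G A B \<Longrightarrow> rank_one_group G B A"
  unfolding rank_one_group_def by (simp add: Un_commute) blast

context group
begin

text \<open>In a rank one group the map a \<mapsto> B^a is injective on A: if some
  1 \<noteq> e \<in> A normalised B, then A^b = B^e = B for some b \<in> B, forcing A = B.\<close>
lemma rank_one_conjset_inj:
  assumes R: "rank_one_group G A B" and c: "c \<in> A" and d: "d \<in> A"
    and eq: "conjset G B c = conjset G B d"
  shows "c = d"
proof (rule ccontr)
  assume "c \<noteq> d"
  have sA: "subgroup A G" and sB: "subgroup B G" and AB: "A \<noteq> B"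
    using R unfolding rank_one_group_def by auto
  have AC: "A \<subseteq> carrier G" and BC: "B \<subseteq> carrier G"
    using sA sB subgroup.subset by blast+
  define e where "e = c \<otimes> inv d"
  have cC: "c \<in> carrier G" and dC: "d \<in> carrier G" using c d AC by auto
  have "c = e \<otimes> d" unfolding e_def using cC dC by (simp add: m_assoc)
  then have e: "e \<in> A" "e \<noteq> \<one>"
    using \<open>c \<noteq> d\<close> c d sA cC dC unfolding e_def
    by (auto intro: subgroup.m_closed subgroup.m_inv_closed)
  have "conjset G B e = conjset G (conjset G B d) (inv d)"
    unfolding e_def using conjset_mult[OF BC cC inv_closed[OF dC]] eq by simp
  also have "\<dots> = B" using conjset_inv[OF BC dC refl] .
  finally have Be: "conjset G B e = B" .
  obtain b where b: "b \<in> B" "conjset G A b = conjset G B e"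
    using R e unfolding rank_one_group_def by blast
  have "A = conjset G B (inv b)"
    using conjset_inv[OF AC _ b(2)] b(1) BC Be by auto
  also have "\<dots> = B" using conjset_subgroup_self[OF sB subgroup.m_inv_closed[OF sB b(1)]] .
  finally show False using AB by contradiction
qed

lemma b_of_spec:
  assumes R: "rank_one_group G A B" and a: "a \<in> A" "a \<noteq> \<one>"
  shows "b_of G A B a \<in> B - {\<one>} \<and> conjset G A (b_of G A B a) = conjset G B a"
  unfolding b_of_def
proof (rule theI')
  obtain b where b: "b \<in> B - {\<one>}" "conjset G A b = conjset G B a"
    using R a unfolding rank_one_group_def by blast
  then have "b \<in> B - {\<one>} \<and> conjset G A b = conjset G B a" by blast
  moreover have "b' = b" if "b' \<in> B - {\<one>} \<and> conjset G A b' = conjset G B a" for b'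
    using rank_one_conjset_inj[OF rank_one_group_sym[OF R], of b' b] that b by simp
  ultimately show "\<exists>!b. b \<in> B - {\<one>} \<and> conjset G A b = conjset G B a"
    by (rule ex1I)
qed

lemma special_conjset_inv:
  assumes S: "special_rank_one_group G A B" and a: "a \<in> A" "a \<noteq> \<one>"
  shows "conjset G A (inv (b_of G A B a)) = conjset G B (inv a)"
proof -
  have R: "rank_one_group G A B" using S unfolding special_rank_one_group_def by blast
  have "subgroup A G" using R unfolding rank_one_group_def by blast
  then have ia: "inv a \<in> A" "inv a \<noteq> \<one>"
    using a subgroup.m_inv_closed subgroup.mem_carrier inv_eq_1_iff by metis+
  have "b_of G A B (inv a) = inv (b_of G A B a)"
    using S a unfolding special_rank_one_group_def by blast
  with b_of_spec[OF R ia] show ?thesis by simp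
qed

end

text \<open>The element mu(a) = a b(a)^-1 a, which interchanges A and B under
  conjugation (in a special rank one group).\<close>
definition mu :: "('a, 'b) monoid_scheme \<Rightarrow> 'a set \<Rightarrow> 'a set \<Rightarrow> 'a \<Rightarrow> 'a" where
  "mu G A B a = a \<otimes>\<^bsub>G\<^esub> inv\<^bsub>G\<^esub> (b_of G A B a) \<otimes>\<^bsub>G\<^esub> a"

context group
begin

lemma mu_closed:
  assumes "rank_one_group G A B" "a \<in> A" "a \<noteq> \<one>"
  shows "mu G A B a \<in> carrier G"
proof -
  have "subgroup A G" "subgroup B G" using assms(1) unfolding rank_one_group_def by auto
  then have "a \<in> carrier G" "b_of G A B a \<in> carrier G"
    using b_of_spec[OF assms] assms(2) subgroup.mem_carrier by auto
  then show ?thesis unfolding mu_def by simp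
qed

text \<open>B^mu(a) = ((B^a)^(b(a)^-1))^a = ((A^b(a))^(b(a)^-1))^a = A^a = A.\<close>
lemma conjset_B_mu:
  assumes R: "rank_one_group G A B" and a: "a \<in> A" "a \<noteq> \<one>"
  shows "conjset G B (mu G A B a) = A"
proof -
  have sA: "subgroup A G" and sB: "subgroup B G" using R unfolding rank_one_group_def by auto
  note AC = subgroup.subset[OF sA] and BC = subgroup.subset[OF sB]
  let ?b = "b_of G A B a"
  have aC: "a \<in> carrier G" and bC: "?b \<in> carrier G" using a b_of_spec[OF R a] AC BC by auto
  have "conjset G B (mu G A B a) = conjset G (conjset G (conjset G B a) (inv ?b)) a"
    unfolding mu_def using conjset_mult BC aC bC conjset_closed by simp
  also have "\<dots> = conjset G (conjset G (conjset G A ?b) (inv ?b)) a"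
    using b_of_spec[OF R a] by simp
  also have "\<dots> = A"
    using conjset_inv[OF AC bC refl] conjset_subgroup_self[OF sA a(1)] by simp
  finally show ?thesis .
qed

text \<open>A^mu(a) = ((A^a)^(b(a)^-1))^a = (B^(a^-1))^a = B, using specialness.\<close>
lemma conjset_A_mu:
  assumes S: "special_rank_one_group G A B" and a: "a \<in> A" "a \<noteq> \<one>"
  shows "conjset G A (mu G A B a) = B"
proof -
  have R: "rank_one_group G A B" using S unfolding special_rank_one_group_def by blast
  have sA: "subgroup A G" and sB: "subgroup B G" using R unfolding rank_one_group_def by auto
  note AC = subgroup.subset[OF sA] and BC = subgroup.subset[OF sB]
  let ?b = "b_of G A B a"
  have aC: "a \<in> carrier G" and bC: "?b \<in> carrier G" using a b_of_spec[OF R a] AC BC by auto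
  have "conjset G A (mu G A B a) = conjset G (conjset G (conjset G A a) (inv ?b)) a"
    unfolding mu_def using conjset_mult AC aC bC conjset_closed by simp
  also have "\<dots> = conjset G (conjset G B (inv a)) a"
    using conjset_subgroup_self[OF sA a(1)] special_conjset_inv[OF S a] by simp
  also have "\<dots> = B" using conjset_mult[OF BC] conjset_one[OF BC] aC by simp
  finally show ?thesis .
qed

text \<open>Conjugating b(c) by mu(a)^-1 carries B back to A, so lands in A.\<close>
lemma conjg_b_of_mu_in_A:
  assumes S: "special_rank_one_group G A B"
    and a: "a \<in> A" "a \<noteq> \<one>" and c: "c \<in> A" "c \<noteq> \<one>"
  shows "conjg G (b_of G A B c) (inv (mu G A B a)) \<in> A"
proof -
  have R: "rank_one_group G A B" using S unfolding special_rank_one_group_def by blast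
  have AC: "A \<subseteq> carrier G" using R subgroup.subset unfolding rank_one_group_def by blast
  have "conjset G B (inv (mu G A B a)) = A"
    using conjset_inv[OF AC mu_closed[OF R a] conjset_A_mu[OF S a]] .
  then show ?thesis
    using b_of_spec[OF R c] unfolding conjset_def by blast
qed

text \<open>For z = mu(a) b(a' a) mu(a)^-1 one has
  z a = mu(a) b(a' a) a^-1 b(a), and therefore
  B^(z a) = ((A^b(a'a))^(a^-1))^b(a) = ((B^(a'a))^(a^-1))^b(a)
          = (B^a')^b(a) = A^(b(a') b(a)).\<close>
lemma conjset_B_transport:
  assumes S: "special_rank_one_group G A B"
    and a: "a \<in> A" "a \<noteq> \<one>" and a': "a' \<in> A" "a' \<noteq> \<one>" and a'a: "a' \<otimes> a \<noteq> \<one>"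
  shows "conjset G B (conjg G (b_of G A B (a' \<otimes> a)) (inv (mu G A B a)) \<otimes> a)
           = conjset G A (b_of G A B a' \<otimes> b_of G A B a)"
proof -
  have R: "rank_one_group G A B" using S unfolding special_rank_one_group_def by blast
  have sA: "subgroup A G" and sB: "subgroup B G" using R unfolding rank_one_group_def by auto
  note AC = subgroup.subset[OF sA] and BC = subgroup.subset[OF sB]
  have c: "a' \<otimes> a \<in> A" using subgroup.m_closed[OF sA a'(1) a(1)] .
  let ?b = "b_of G A B" and ?m = "mu G A B a"
  have aC: "a \<in> carrier G" and a'C: "a' \<in> carrier G" using a a' AC by auto
  have bC: "?b x \<in> carrier G" if "x \<in> A" "x \<noteq> \<one>" for x
    using b_of_spec[OF R that] BC by auto
  have mC: "?m \<in> carrier G" using mu_closed[OF R a] .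
  have m_inv: "inv ?m = inv a \<otimes> ?b a \<otimes> inv a"
    unfolding mu_def using aC bC[OF a] by (simp add: inv_mult_group m_assoc)
  have za: "conjg G (?b (a' \<otimes> a)) (inv ?m) \<otimes> a = ?m \<otimes> ?b (a' \<otimes> a) \<otimes> inv a \<otimes> ?b a"
    unfolding conjg_def inv_inv[OF mC] unfolding m_inv using aC bC[OF a] bC[OF c a'a] mC
    by (simp add: m_assoc)
  have "conjset G B (?m \<otimes> ?b (a' \<otimes> a) \<otimes> inv a \<otimes> ?b a)
      = conjset G (conjset G (conjset G (conjset G B ?m) (?b (a' \<otimes> a))) (inv a)) (?b a)"
    using conjset_mult BC mC bC[OF c a'a] aC bC[OF a] conjset_closed by simp
  also have "\<dots> = conjset G (conjset G (conjset G B (a' \<otimes> a)) (inv a)) (?b a)"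
    using conjset_B_mu[OF R a] b_of_spec[OF R c a'a] by simp
  also have "conjset G (conjset G B (a' \<otimes> a)) (inv a) = conjset G B a'"
    using conjset_mult[OF BC] aC a'C by (simp add: m_assoc)
  also have "\<dots> = conjset G A (?b a')" using b_of_spec[OF R a'] by simp
  also have "conjset G (conjset G A (?b a')) (?b a) = conjset G A (?b a' \<otimes> ?b a)"
    using conjset_mult[OF AC bC[OF a'] bC[OF a]] .
  finally show ?thesis unfolding za .
qed

text \<open>mu(a1) mu(a2)^-1 normalises both A and B, since each mu(a)
  interchanges A and B.\<close>
lemma mu_quotient_normalizes:
  assumes S: "special_rank_one_group G A B"
    and a1: "a1 \<in> A" "a1 \<noteq> \<one>" and a2: "a2 \<in> A" "a2 \<noteq> \<one>"
  shows "mu G A B a1 \<otimes> inv (mu G A B a2) \<in> normalizer G A \<inter> normalizer G B"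
proof -
  have R: "rank_one_group G A B" using S unfolding special_rank_one_group_def by blast
  have AC: "A \<subseteq> carrier G" and BC: "B \<subseteq> carrier G"
    using R subgroup.subset unfolding rank_one_group_def by blast+
  note m1 = mu_closed[OF R a1] and m2 = mu_closed[OF R a2]
  show ?thesis
    using quotient_in_normalizer[OF AC m1 m2 conjset_A_mu[OF S a1] conjset_A_mu[OF S a2]]
      quotient_in_normalizer[OF BC m1 m2 conjset_B_mu[OF R a1] conjset_B_mu[OF R a2]]
    by blast
qed

text \<open>With z_i = mu(a_i) b(a1 a2) mu(a_i)^-1 one has z_1 a1 = z_2 a2: both have
  the same B-conjugate A^(b(a1) b(a2)) (A and B are abelian), and a \<mapsto> B^a is
  injective on A.\<close>
lemma conjg_b_of_mu_cancel:
  assumes S: "special_rank_one_group G A B"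
    and a1: "a1 \<in> A" "a1 \<noteq> \<one>" and a2: "a2 \<in> A" "a2 \<noteq> \<one>" and a12: "a1 \<otimes> a2 \<noteq> \<one>"
  defines "z \<equiv> \<lambda>a. conjg G (b_of G A B (a1 \<otimes> a2)) (inv (mu G A B a))"
  shows "z a1 \<otimes> a1 = z a2 \<otimes> a2"
proof -
  have R: "rank_one_group G A B" using S unfolding special_rank_one_group_def by blast
  have sA: "subgroup A G" using R unfolding rank_one_group_def by blast
  have commA: "a2 \<otimes> a1 = a1 \<otimes> a2"
    using R a1 a2 unfolding rank_one_group_def by blast
  have commB: "b_of G A B a2 \<otimes> b_of G A B a1 = b_of G A B a1 \<otimes> b_of G A B a2"
    using R b_of_spec[OF R a1] b_of_spec[OF R a2] unfolding rank_one_group_def by blast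
  have a12A: "a1 \<otimes> a2 \<in> A" using subgroup.m_closed[OF sA a1(1) a2(1)] .
  have zA: "z a \<in> A" if "a \<in> A" "a \<noteq> \<one>" for a
    unfolding z_def using conjg_b_of_mu_in_A[OF S that a12A a12] .
  have "conjset G B (z a1 \<otimes> a1) = conjset G A (b_of G A B a2 \<otimes> b_of G A B a1)"
    using conjset_B_transport[OF S a1 a2] commA a12 unfolding z_def by simp
  also have "\<dots> = conjset G B (z a2 \<otimes> a2)"
    using conjset_B_transport[OF S a2 a1 a12] commB unfolding z_def by simp
  finally show ?thesis
    using rank_one_conjset_inj[OF R] subgroup.m_closed[OF sA] zA a1 a2 by blast
qed

lemma in_coset_comm_subgroup:
  assumes "z \<in> A" "h \<in> H" "a1 = a2 \<otimes> commg G z h"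
  shows "a1 \<in> a2 <# comm_subgroup G A H"
  unfolding comm_subgroup_def l_coset_def using assms by (auto intro: generate.incl)

end

theorem lemma2p2:
  fixes G :: "('a, 'b) monoid_scheme" and A B :: "'a set"
  assumes "special_rank_one_group G A B"
    and "a1 \<in> A" and "a2 \<in> A"
    and "a1 \<noteq> \<one>\<^bsub>G\<^esub>" and "a2 \<noteq> \<one>\<^bsub>G\<^esub>"
    and "a1 \<otimes>\<^bsub>G\<^esub> a2 \<noteq> \<one>\<^bsub>G\<^esub>"
  shows "a1 \<in> a2 <#\<^bsub>G\<^esub> comm_subgroup G A (normalizer G A \<inter> normalizer G B)"
proof -
  note S = assms(1)
  have R: "rank_one_group G A B" using S unfolding special_rank_one_group_def by blast
  interpret group G using R unfolding rank_one_group_def by blast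
  have sA: "subgroup A G" and sB: "subgroup B G" and commA: "\<forall>x\<in>A. \<forall>y\<in>A. x \<otimes>\<^bsub>G\<^esub> y = y \<otimes>\<^bsub>G\<^esub> x"
    using R unfolding rank_one_group_def by blast+
  have a1: "a1 \<in> A" "a1 \<noteq> \<one>\<^bsub>G\<^esub>" and a2: "a2 \<in> A" "a2 \<noteq> \<one>\<^bsub>G\<^esub>" using assms by auto
  have a1C: "a1 \<in> carrier G" and a2C: "a2 \<in> carrier G"
    using a1 a2 subgroup.mem_carrier[OF sA] by auto
  define z where "z = (\<lambda>a. conjg G (b_of G A B (a1 \<otimes>\<^bsub>G\<^esub> a2)) (inv\<^bsub>G\<^esub> (mu G A B a)))"
  define h where "h = mu G A B a1 \<otimes>\<^bsub>G\<^esub> inv\<^bsub>G\<^esub> (mu G A B a2)"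
  have a12A: "a1 \<otimes>\<^bsub>G\<^esub> a2 \<in> A" using subgroup.m_closed[OF sA a1(1) a2(1)] .
  have z1A: "z a1 \<in> A" and z2A: "z a2 \<in> A"
    unfolding z_def using conjg_b_of_mu_in_A[OF S _ _ a12A assms(6)] a1 a2 by auto
  then have z1C: "z a1 \<in> carrier G" and z2C: "z a2 \<in> carrier G"
    using subgroup.mem_carrier[OF sA] by auto
  have cancel: "z a1 \<otimes>\<^bsub>G\<^esub> a1 = z a2 \<otimes>\<^bsub>G\<^esub> a2"
    unfolding z_def by (rule conjg_b_of_mu_cancel[OF S a1 a2 assms(6)])
  have hN: "h \<in> normalizer G A \<inter> normalizer G B"
    unfolding h_def using mu_quotient_normalizes[OF S a1 a2] .
  have b12C: "b_of G A B (a1 \<otimes>\<^bsub>G\<^esub> a2) \<in> carrier G"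
    using b_of_spec[OF R a12A assms(6)] subgroup.mem_carrier[OF sB] by auto
  note m1 = mu_closed[OF R a1] and m2 = mu_closed[OF R a2]
  have "conjg G (z a1) h = z a2"
    unfolding z_def h_def using conjg_mult[OF b12C inv_closed[OF m1] m_closed[OF m1 inv_closed[OF m2]]]
      m1 m2 by (simp add: m_assoc[symmetric])
  also have "\<dots> = z a1 \<otimes>\<^bsub>G\<^esub> a1 \<otimes>\<^bsub>G\<^esub> inv\<^bsub>G\<^esub> a2"
    unfolding cancel using z2C a2C by (simp add: m_assoc)
  finally have "commg G (z a1) h = a1 \<otimes>\<^bsub>G\<^esub> inv\<^bsub>G\<^esub> a2"
    using commg_conjg[OF z1C] m1 m2 z1C a1C a2C unfolding h_def by (simp add: m_assoc[symmetric])
  also have "\<dots> = inv\<^bsub>G\<^esub> a2 \<otimes>\<^bsub>G\<^esub> a1"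
    using commA a1(1) subgroup.m_inv_closed[OF sA a2(1)] by blast
  finally have "a1 = a2 \<otimes>\<^bsub>G\<^esub> commg G (z a1) h"
    using a1C a2C by (simp add: m_assoc[symmetric])
  then show ?thesis using in_coset_comm_subgroup[OF z1A hN] by blast
qed

end
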